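(* Let $C$ and $E$ be finite non-empty constraints on the same sequence of variables with $C\subseteq E$, and let $\mathcal R$ be a set of rules of the form $\mathbf A\to\mathbf B$ involving only these variables. Then $C$ is closed under all rules of $\mathcal R$ that are valid for $E$ if and only if $C$ is closed under all minimal valid rules in $\mathcal R$ for $E$.
   Context: A constraint on variables $x_1,\dots,x_n$ with domains $D_1,\dots,D_n$ is a subset of $D_1\times\dots\times D_n$; for a tuple $d$ and variable $x$, $d[x]$ is the corresponding component. Atomic formulas are $x=a$, $x\neq a$, $x\in S$; $\models_d x=a$ iff $d[x]=a$, $\models_d x\neq a$ iff $d[x]\neq a$, $\models_d x\in S$ iff $d[x]\in S$; for a sequence $\mathbf A$ of atomic formulas, $\models_d\mathbf A$ iff $d$ satisfies each of them. A rule is $\mathbf A\to\mathbf B$ with $\mathbf A,\mathbf B$ finite sequences of atomic formulas. For a constraint $C$: - $\mathbf A\to\mathbf B$ is valid for $C$ if for all $d\in C$, $\models_d\mathbf A$ implies $\models_d\mathbf B$; - $C$ is closed under $\mathbf A\to\mathbf B$ if ($\models_d\mathbf A$ for all $d\in C$) implies ($\models_d\mathbf B$ for all $d\in C$); - $\mathbf A\to\mathbf B$ is feasible for $C$ if $\models_d\mathbf A$ for some $d\in C$; - $\mathbf A\to\mathbf B$ extends $\mathbf A'\to\mathbf B$ (same conclusion) if $\mathbf A$ contains all variables occurring in $\mathbf A'$ and for all $d\in C$, $\models_d\mathbf A$ implies $\models_d\mathbf A'$; $r$ properly extends $r'$ if $r$ extends $r'$ but $r'$ does not extend $r$; - given a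 set of rules $\mathcal R$, a rule is minimal in $\mathcal R$ (for $C$) if it is feasible for $C$ and does not properly extend a rule of $\mathcal R$ valid for $C$. *)

theory Defs
  imports Main
begin

(* Variables x_1..x_n are represented by indices 0..n-1; a tuple d is a list of
   length n and d[x_i] is d ! i. *)

datatype 'a atom = AEq nat 'a | ANeq nat 'a | AIn nat "'a set"

fun atom_var :: "'a atom \<Rightarrow> nat" where
  "atom_var (AEq x a) = x"
| "atom_var (ANeq x a) = x"
| "atom_var (AIn x S) = x"

fun sat_atom :: "'a list \<Rightarrow> 'a atom \<Rightarrow> bool" where
  "sat_atom d (AEq x a) = (d ! x = a)"
| "sat_atom d (ANeq x a) = (d ! x \<noteq> a)"
| "sat_atom d (AIn x S) = (d ! x \<in> S)"

definition sat :: "'a list \<Rightarrow> 'a atom list \<Rightarrow> bool" where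
  "sat d As = (\<forall>A\<in>set As. sat_atom d A)"

definition vars :: "'a atom list \<Rightarrow> nat set" where
  "vars As = atom_var ` set As"

type_synonym 'a rule = "'a atom list \<times> 'a atom list"

definition constraint :: "nat \<Rightarrow> (nat \<Rightarrow> 'a set) \<Rightarrow> 'a list set \<Rightarrow> bool" where
  "constraint n D C = (\<forall>d\<in>C. length d = n \<and> (\<forall>i<n. d ! i \<in> D i))"

definition rule_over :: "nat \<Rightarrow> 'a rule \<Rightarrow> bool" where
  "rule_over n r = (vars (fst r) \<union> vars (snd r) \<subseteq> {..<n})"

definition valid :: "'a list set \<Rightarrow> 'a rule \<Rightarrow> bool" where
  "valid C r = (\<forall>d\<in>C. sat d (fst r) \<longrightarrow> sat d (snd r))"

definition closed_under :: "'a list set \<Rightarrow> 'a rule \<Rightarrow> bool" where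
  "closed_under C r = ((\<forall>d\<in>C. sat d (fst r)) \<longrightarrow> (\<forall>d\<in>C. sat d (snd r)))"

definition feasible :: "'a list set \<Rightarrow> 'a rule \<Rightarrow> bool" where
  "feasible C r = (\<exists>d\<in>C. sat d (fst r))"

definition extends :: "'a list set \<Rightarrow> 'a rule \<Rightarrow> 'a rule \<Rightarrow> bool" where
  "extends C r r' = (snd r = snd r' \<and> vars (fst r') \<subseteq> vars (fst r)
                    \<and> (\<forall>d\<in>C. sat d (fst r) \<longrightarrow> sat d (fst r')))"

definition properly_extends :: "'a list set \<Rightarrow> 'a rule \<Rightarrow> 'a rule \<Rightarrow> bool" where
  "properly_extends C r r' = (extends C r r' \<and> \<not> extends C r' r)"

definition minimal_in :: "'a rule set \<Rightarrow> 'a list set \<Rightarrow> 'a rule \<Rightarrow> bool" where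
  "minimal_in R C r = (feasible C r \<and>
      \<not> (\<exists>r'\<in>R. valid C r' \<and> properly_extends C r r'))"

end

theory Submission
  imports Defs
begin

text \<open>A proper extension either has strictly more premise variables or strictly fewer
  tuples of \<open>E\<close> falsifying its premise, and neither quantity can decrease along an
  extension; so for finite \<open>E\<close> proper extension is well-founded, and every feasible
  valid rule of \<open>\<R>\<close> extends a minimal one. Since \<open>C \<subseteq> E\<close>, a rule extending a rule
  under which \<open>C\<close> is closed is itself closed, and an infeasible rule is closed vacuously
  because \<open>C\<close> is non-empty.\<close>

lemma finite_vars: "finite (vars As)"
  unfolding vars_def by simp

lemma extends_refl: "extends E r r"
  unfolding extends_def by simp

lemma extends_trans: "extends E r r' \<Longrightarrow> extends E r' r'' \<Longrightarrow> extends E r r''"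
  unfolding extends_def by auto

lemma feasible_extends: "extends E r r' \<Longrightarrow> feasible E r \<Longrightarrow> feasible E r'"
  unfolding extends_def feasible_def by blast

lemma closed_under_extends:
  assumes "C \<subseteq> E" "extends E r r'" "closed_under C r'"
  shows "closed_under C r"
  using assms unfolding extends_def closed_under_def by (metis subsetD)

lemma closed_under_infeasible:
  assumes "C \<subseteq> E" "C \<noteq> {}" "\<not> feasible E r"
  shows "closed_under C r"
  using assms unfolding feasible_def closed_under_def by blast

definition extension_measure :: "'a list set \<Rightarrow> 'a rule \<Rightarrow> nat" where
  "extension_measure E r = card (vars (fst r)) + card {d \<in> E. \<not> sat d (fst r)}"

lemma extension_measure_less:
  assumes "finite E" "properly_extends E r r'"
  shows "extension_measure E r' < extension_measure E r"
proof -
  have ext: "snd r = snd r'" "vars (fst r') \<subseteq> vars (fst r)"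
      "\<forall>d\<in>E. sat d (fst r) \<longrightarrow> sat d (fst r')"
    and not_ext: "\<not> extends E r' r"
    using assms(2) unfolding properly_extends_def extends_def by simp_all
  have fin: "finite {d \<in> E. \<not> sat d (fst r)}"
    using assms(1) by simp
  have falsifiers: "{d \<in> E. \<not> sat d (fst r')} \<subseteq> {d \<in> E. \<not> sat d (fst r)}"
    using ext(3) by blast
  show ?thesis
  proof (cases "vars (fst r) \<subseteq> vars (fst r')")
    case True
    then obtain d where "d \<in> E" "sat d (fst r')" "\<not> sat d (fst r)"
      using not_ext ext(1) unfolding extends_def by auto
    then have "{d \<in> E. \<not> sat d (fst r')} \<subset> {d \<in> E. \<not> sat d (fst r)}"
      using falsifiers by blast
    then have "card {d \<in> E. \<not> sat d (fst r')} < card {d \<in> E. \<not> sat d (fst r)}"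
      by (rule psubset_card_mono[OF fin])
    moreover have "card (vars (fst r')) \<le> card (vars (fst r))"
      by (rule card_mono[OF finite_vars ext(2)])
    ultimately show ?thesis
      unfolding extension_measure_def by simp
  next
    case False
    then have "vars (fst r') \<subset> vars (fst r)"
      using ext(2) by blast
    then have "card (vars (fst r')) < card (vars (fst r))"
      by (rule psubset_card_mono[OF finite_vars])
    moreover have "card {d \<in> E. \<not> sat d (fst r')} \<le> card {d \<in> E. \<not> sat d (fst r)}"
      by (rule card_mono[OF fin falsifiers])
    ultimately show ?thesis
      unfolding extension_measure_def by simp
  qed
qed

lemma wf_properly_extends:
  assumes "finite E"
  shows "wf {(r', r). properly_extends E r r'}"
  by (rule wf_subset[OF wf_measure[of "extension_measure E"]])
     (auto dest: extension_measure_less[OF assms])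

lemma ex_minimal_in_extended:
  assumes "finite E" "r \<in> R" "valid E r" "feasible E r"
  shows "\<exists>r'\<in>R. valid E r' \<and> minimal_in R E r' \<and> extends E r r'"
  using assms(2-4)
proof (induction r rule: wf_induct_rule[OF wf_properly_extends[OF assms(1)]])
  case (1 r)
  show ?case
  proof (cases "minimal_in R E r")
    case True
    then show ?thesis
      using "1.prems" extends_refl by blast
  next
    case False
    then obtain r' where r': "r' \<in> R" "valid E r'" "properly_extends E r r'"
      using "1.prems"(3) unfolding minimal_in_def by blast
    then have "extends E r r'"
      unfolding properly_extends_def by simp
    moreover have "feasible E r'"
      using feasible_extends[OF \<open>extends E r r'\<close> "1.prems"(3)] .
    ultimately show ?thesis
      using "1.IH"[of r'] r' extends_trans by blast
  qed
qed

theorem mainTheorem2: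
  fixes n :: nat and D :: "nat \<Rightarrow> 'a set" and C E :: "'a list set" and R :: "'a rule set"
  assumes "constraint n D C" and "constraint n D E"
    and "finite C" and "C \<noteq> {}" and "finite E" and "E \<noteq> {}"
    and "C \<subseteq> E"
    and "\<forall>r\<in>R. rule_over n r"
  shows "(\<forall>r\<in>R. valid E r \<longrightarrow> closed_under C r) \<longleftrightarrow>
         (\<forall>r\<in>R. valid E r \<and> minimal_in R E r \<longrightarrow> closed_under C r)"
proof
  assume minimal_closed: "\<forall>r\<in>R. valid E r \<and> minimal_in R E r \<longrightarrow> closed_under C r"
  show "\<forall>r\<in>R. valid E r \<longrightarrow> closed_under C r"
  proof (intro ballI impI)
    fix r assume r: "r \<in> R" "valid E r"
    show "closed_under C r"
    proof (cases "feasible E r")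
      case True
      then obtain r' where "r' \<in> R" "valid E r'" "minimal_in R E r'" "extends E r r'"
        using ex_minimal_in_extended[OF \<open>finite E\<close> r] by blast
      then show ?thesis
        using minimal_closed closed_under_extends[OF \<open>C \<subseteq> E\<close>] by blast
    next
      case False
      then show ?thesis
        using closed_under_infeasible[OF \<open>C \<subseteq> E\<close> \<open>C \<noteq> {}\<close>] by blast
    qed
  qed
qed blast

end
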